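(* Let $\mathbb A$ be an abelian category with enough projective objects and let $(f_0,f_1):a\to b$ be a morphism in $\mathbb A^{[1]}_c$, with $a:A_1\to A_0$, $b:B_1\to B_0$. Let $K=A_0\times_{B_0}B_1$ be the pull-back of $f_0$ and $b$, with projections $k:K\to A_0$, $\kappa:K\to B_1$, and let $k':A_1\to K$ be the morphism with $kk'=a$, $\kappa k'=f_1$. Choose an epimorphism $\epsilon:C_0\to K$ with $C_0$ projective, and let $C_1=C_0\times_K A_1$ be the pull-back of $\epsilon$ and $k'$, with projections $c:C_1\to C_0$ and $\epsilon':C_1\to A_1$. Then $(k\epsilon,\epsilon'):c\to a$ is a morphism of $\mathbb A^{[1]}_c$, $\kappa\epsilon$ is a 2-arrow $(f_0,f_1)\circ(k\epsilon,\epsilon')\Rightarrow 0$, and the triple $(c,(k\epsilon,\epsilon'),\kappa\epsilon)$ is a 2-kernel of $(f_0,f_1)$ in $\mathbb A^{[1]}_c$.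
   Context: Let $\mathbb A$ be an abelian category. The 2-category $\mathbb A^{[1]}$ has as objects the morphisms $a:A_1\to A_0$ of $\mathbb A$. For objects $a:A_1\to A_0$ and $b:B_1\to B_0$, a morphism $a\to b$ is a pair $(f_0,f_1)$ of morphisms $f_i:A_i\to B_i$ of $\mathbb A$ with $b f_1=f_0 a$; composition is componentwise. A 2-arrow $(f_0,f_1)\Rightarrow(g_0,g_1)$ between morphisms $a\to b$ is a morphism $\alpha:A_0\to B_1$ of $\mathbb A$ with $f_1-g_1=\alpha a$ and $f_0-g_0=b\alpha$; vertical composition is addition of such $\alpha$'s, and whiskering is given by $(h_0,h_1)\circ\alpha=h_1\alpha$ and $\alpha\circ(e_0,e_1)=\alpha e_0$. All 2-arrows are invertible. $\mathbb A^{[1]}_c$ is the full 2-subcategory of $\mathbb A^{[1]}$ on the objects $a:A_1\to A_0$ with $A_0$ projective in $\mathbb A$. In a 2-category $\mathcal C$ of this kind (with zero morphisms), a 2-kernel of $f:a\to b$ is a triple $(k,u:k\to a,\kappa:fu\Rightarrow0)$ such that for every object $x$ of $\mathcal C$ the functor $v\mapsto (uv, \kappa v)$ from $\mathbf{Hom}(x,k)$ to the groupoid of pairs $(w\in\mathbf{Hom}(x,a),\ \phi:fw\Rightarrow 0)$ (morphisms: 2-arrows $w\Rightarrow w'$ compatible with the $\phi$'s) is an equivalence of groupoids. *)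

theory Defs
  imports Main
begin

text \<open>A category with objects of type 'o and morphisms of type 'm.
  Cmp C g f is the composite g after f (defined when Cod f = Dom g).
  Add, Neg, Zer give the abelian-group structure on hom-sets.\<close>

record ('o, 'm) acat =
  Obj :: "'o set"
  Mor :: "'m set"
  Dom :: "'m \<Rightarrow> 'o"
  Cod :: "'m \<Rightarrow> 'o"
  Idm :: "'o \<Rightarrow> 'm"
  Cmp :: "'m \<Rightarrow> 'm \<Rightarrow> 'm"
  Add :: "'m \<Rightarrow> 'm \<Rightarrow> 'm"
  Neg :: "'m \<Rightarrow> 'm"
  Zer :: "'o \<Rightarrow> 'o \<Rightarrow> 'm"

definition hom :: "('o, 'm) acat \<Rightarrow> 'o \<Rightarrow> 'o \<Rightarrow> 'm set" where
  "hom C X Y = {f \<in> Mor C. Dom C f = X \<and> Cod C f = Y}"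

definition category :: "('o, 'm) acat \<Rightarrow> bool" where
  "category C \<longleftrightarrow>
     (\<forall>f \<in> Mor C. Dom C f \<in> Obj C \<and> Cod C f \<in> Obj C) \<and>
     (\<forall>X \<in> Obj C. Idm C X \<in> hom C X X) \<and>
     (\<forall>X Y Z f g. f \<in> hom C X Y \<longrightarrow> g \<in> hom C Y Z \<longrightarrow> Cmp C g f \<in> hom C X Z) \<and>
     (\<forall>W X Y Z f g h. f \<in> hom C W X \<longrightarrow> g \<in> hom C X Y \<longrightarrow> h \<in> hom C Y Z \<longrightarrow>
         Cmp C h (Cmp C g f) = Cmp C (Cmp C h g) f) \<and>
     (\<forall>X Y f. f \<in> hom C X Y \<longrightarrow> Cmp C f (Idm C X) = f \<and> Cmp C (Idm C Y) f = f)"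

definition preadditive :: "('o, 'm) acat \<Rightarrow> bool" where
  "preadditive C \<longleftrightarrow> category C \<and>
     (\<forall>X \<in> Obj C. \<forall>Y \<in> Obj C. Zer C X Y \<in> hom C X Y) \<and>
     (\<forall>X Y f g. f \<in> hom C X Y \<longrightarrow> g \<in> hom C X Y \<longrightarrow> Add C f g \<in> hom C X Y) \<and>
     (\<forall>X Y f. f \<in> hom C X Y \<longrightarrow> Neg C f \<in> hom C X Y) \<and>
     (\<forall>X Y f g h. f \<in> hom C X Y \<longrightarrow> g \<in> hom C X Y \<longrightarrow> h \<in> hom C X Y \<longrightarrow>
         Add C (Add C f g) h = Add C f (Add C g h)) \<and>
     (\<forall>X Y f g. f \<in> hom C X Y \<longrightarrow> g \<in> hom C X Y \<longrightarrow> Add C f g = Add C g f) \<and>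
     (\<forall>X Y f. f \<in> hom C X Y \<longrightarrow> Add C f (Zer C X Y) = f \<and> Add C f (Neg C f) = Zer C X Y) \<and>
     (\<forall>X Y Z f g h. f \<in> hom C X Y \<longrightarrow> g \<in> hom C X Y \<longrightarrow> h \<in> hom C Y Z \<longrightarrow>
         Cmp C h (Add C f g) = Add C (Cmp C h f) (Cmp C h g)) \<and>
     (\<forall>X Y Z f g h. f \<in> hom C X Y \<longrightarrow> g \<in> hom C Y Z \<longrightarrow> h \<in> hom C Y Z \<longrightarrow>
         Cmp C (Add C g h) f = Add C (Cmp C g f) (Cmp C h f))"

definition mono :: "('o, 'm) acat \<Rightarrow> 'm \<Rightarrow> bool" where
  "mono C m \<longleftrightarrow> m \<in> Mor C \<and>
     (\<forall>W g h. g \<in> hom C W (Dom C m) \<longrightarrow> h \<in> hom C W (Dom C m) \<longrightarrow>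
        Cmp C m g = Cmp C m h \<longrightarrow> g = h)"

definition epi :: "('o, 'm) acat \<Rightarrow> 'm \<Rightarrow> bool" where
  "epi C e \<longleftrightarrow> e \<in> Mor C \<and>
     (\<forall>W g h. g \<in> hom C (Cod C e) W \<longrightarrow> h \<in> hom C (Cod C e) W \<longrightarrow>
        Cmp C g e = Cmp C h e \<longrightarrow> g = h)"

definition is_kernel :: "('o, 'm) acat \<Rightarrow> 'm \<Rightarrow> 'm \<Rightarrow> bool" where
  "is_kernel C f k \<longleftrightarrow> f \<in> Mor C \<and> k \<in> hom C (Dom C k) (Dom C f) \<and>
     Cmp C f k = Zer C (Dom C k) (Cod C f) \<and>
     (\<forall>W \<in> Obj C. \<forall>g \<in> hom C W (Dom C f). Cmp C f g = Zer C W (Cod C f) \<longrightarrow>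
        (\<exists>!h. h \<in> hom C W (Dom C k) \<and> Cmp C k h = g))"

definition is_cokernel :: "('o, 'm) acat \<Rightarrow> 'm \<Rightarrow> 'm \<Rightarrow> bool" where
  "is_cokernel C f q \<longleftrightarrow> f \<in> Mor C \<and> q \<in> hom C (Cod C f) (Cod C q) \<and>
     Cmp C q f = Zer C (Dom C f) (Cod C q) \<and>
     (\<forall>W \<in> Obj C. \<forall>g \<in> hom C (Cod C f) W. Cmp C g f = Zer C (Dom C f) W \<longrightarrow>
        (\<exists>!h. h \<in> hom C (Cod C q) W \<and> Cmp C h q = g))"

definition zero_object :: "('o, 'm) acat \<Rightarrow> 'o \<Rightarrow> bool" where
  "zero_object C Z \<longleftrightarrow> Z \<in> Obj C \<and>
     (\<forall>X \<in> Obj C. (\<exists>!f. f \<in> hom C Z X) \<and> (\<exists>!f. f \<in> hom C X Z))"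

definition is_product :: "('o, 'm) acat \<Rightarrow> 'o \<Rightarrow> 'o \<Rightarrow> 'o \<Rightarrow> 'm \<Rightarrow> 'm \<Rightarrow> bool" where
  "is_product C X Y P p q \<longleftrightarrow> P \<in> Obj C \<and> p \<in> hom C P X \<and> q \<in> hom C P Y \<and>
     (\<forall>W \<in> Obj C. \<forall>g \<in> hom C W X. \<forall>h \<in> hom C W Y.
        (\<exists>!u. u \<in> hom C W P \<and> Cmp C p u = g \<and> Cmp C q u = h))"

definition abelian :: "('o, 'm) acat \<Rightarrow> bool" where
  "abelian C \<longleftrightarrow> preadditive C \<and>
     (\<exists>Z. zero_object C Z) \<and>
     (\<forall>X \<in> Obj C. \<forall>Y \<in> Obj C. \<exists>P p q. is_product C X Y P p q) \<and>
     (\<forall>f \<in> Mor C. (\<exists>k. is_kernel C f k) \<and> (\<exists>q. is_cokernel C f q)) \<and>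
     (\<forall>m. mono C m \<longrightarrow> (\<exists>g. is_kernel C g m)) \<and>
     (\<forall>e. epi C e \<longrightarrow> (\<exists>g. is_cokernel C g e))"

definition projective :: "('o, 'm) acat \<Rightarrow> 'o \<Rightarrow> bool" where
  "projective C P \<longleftrightarrow> P \<in> Obj C \<and>
     (\<forall>X Y e g. e \<in> hom C X Y \<longrightarrow> epi C e \<longrightarrow> g \<in> hom C P Y \<longrightarrow>
        (\<exists>h. h \<in> hom C P X \<and> Cmp C e h = g))"

definition enough_projectives :: "('o, 'm) acat \<Rightarrow> bool" where
  "enough_projectives C \<longleftrightarrow>
     (\<forall>X \<in> Obj C. \<exists>P e. projective C P \<and> e \<in> hom C P X \<and> epi C e)"

definition is_pullback :: "('o, 'm) acat \<Rightarrow> 'm \<Rightarrow> 'm \<Rightarrow> 'o \<Rightarrow> 'm \<Rightarrow> 'm \<Rightarrow> bool" where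
  "is_pullback C f g P p q \<longleftrightarrow> f \<in> Mor C \<and> g \<in> Mor C \<and> Cod C f = Cod C g \<and>
     P \<in> Obj C \<and> p \<in> hom C P (Dom C f) \<and> q \<in> hom C P (Dom C g) \<and>
     Cmp C f p = Cmp C g q \<and>
     (\<forall>W \<in> Obj C. \<forall>h1 \<in> hom C W (Dom C f). \<forall>h2 \<in> hom C W (Dom C g).
        Cmp C f h1 = Cmp C g h2 \<longrightarrow>
        (\<exists>!u. u \<in> hom C W P \<and> Cmp C p u = h1 \<and> Cmp C q u = h2))"

text \<open>An object of A^[1] is a morphism a : A1 \<rightarrow> A0 (A1 = Dom a, A0 = Cod a).
  A morphism a \<rightarrow> b is a pair (f0, f1).\<close>

definition obj1 :: "('o, 'm) acat \<Rightarrow> 'm \<Rightarrow> bool" where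
  "obj1 C a \<longleftrightarrow> a \<in> Mor C"

definition obj1c :: "('o, 'm) acat \<Rightarrow> 'm \<Rightarrow> bool" where
  "obj1c C a \<longleftrightarrow> a \<in> Mor C \<and> projective C (Cod C a)"

definition arr1 :: "('o, 'm) acat \<Rightarrow> 'm \<Rightarrow> 'm \<Rightarrow> 'm \<times> 'm \<Rightarrow> bool" where
  "arr1 C a b f \<longleftrightarrow> obj1 C a \<and> obj1 C b \<and>
     fst f \<in> hom C (Cod C a) (Cod C b) \<and> snd f \<in> hom C (Dom C a) (Dom C b) \<and>
     Cmp C b (snd f) = Cmp C (fst f) a"

definition comp1 :: "('o, 'm) acat \<Rightarrow> 'm \<times> 'm \<Rightarrow> 'm \<times> 'm \<Rightarrow> 'm \<times> 'm" where
  "comp1 C g f = (Cmp C (fst g) (fst f), Cmp C (snd g) (snd f))"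

definition zero1 :: "('o, 'm) acat \<Rightarrow> 'm \<Rightarrow> 'm \<Rightarrow> 'm \<times> 'm" where
  "zero1 C a b = (Zer C (Cod C a) (Cod C b), Zer C (Dom C a) (Dom C b))"

definition diff :: "('o, 'm) acat \<Rightarrow> 'm \<Rightarrow> 'm \<Rightarrow> 'm" where
  "diff C f g = Add C f (Neg C g)"

definition twoarr :: "('o, 'm) acat \<Rightarrow> 'm \<Rightarrow> 'm \<Rightarrow> 'm \<times> 'm \<Rightarrow> 'm \<times> 'm \<Rightarrow> 'm \<Rightarrow> bool" where
  "twoarr C a b f g \<alpha> \<longleftrightarrow> arr1 C a b f \<and> arr1 C a b g \<and>
     \<alpha> \<in> hom C (Cod C a) (Dom C b) \<and>
     diff C (snd f) (snd g) = Cmp C \<alpha> a \<and>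
     diff C (fst f) (fst g) = Cmp C b \<alpha>"

text \<open>2-kernel of f : a \<rightarrow> b in A^[1]_c: the triple (k, u : k \<rightarrow> a, kap : f u \<Rightarrow> 0)
  such that for every object x of A^[1]_c the functor
  v \<mapsto> (u v, kap v) (on 2-arrows: alpha \<mapsto> u alpha = snd u \<cdot> alpha)
  from Hom(x,k) to the groupoid of pairs (w, phi : f w \<Rightarrow> 0) is an equivalence
  of groupoids, i.e. faithful, full and essentially surjective.
  A morphism (w,phi) \<rightarrow> (w',phi') of the target groupoid is a 2-arrow
  beta : w \<Rightarrow> w' with phi = phi' + (f beta) (vertical composition is addition,
  whiskering f beta = snd f \<cdot> beta). Whiskering kap v = kap \<cdot> fst v.\<close>
definition is_2kernel_c ::
  "('o, 'm) acat \<Rightarrow> 'm \<Rightarrow> 'm \<Rightarrow> 'm \<times> 'm \<Rightarrow> 'm \<Rightarrow> 'm \<times> 'm \<Rightarrow> 'm \<Rightarrow> bool" where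
  "is_2kernel_c C a b f k u \<kappa> \<longleftrightarrow>
     obj1c C a \<and> obj1c C b \<and> arr1 C a b f \<and>
     obj1c C k \<and> arr1 C k a u \<and> twoarr C k b (comp1 C f u) (zero1 C k b) \<kappa> \<and>
     (\<forall>x. obj1c C x \<longrightarrow>
        \<comment> \<open>faithful\<close>
        (\<forall>v v' \<alpha> \<alpha>'. twoarr C x k v v' \<alpha> \<longrightarrow> twoarr C x k v v' \<alpha>' \<longrightarrow>
            Cmp C (snd u) \<alpha> = Cmp C (snd u) \<alpha>' \<longrightarrow> \<alpha> = \<alpha>') \<and>
        \<comment> \<open>full\<close>
        (\<forall>v v' \<beta>. arr1 C x k v \<longrightarrow> arr1 C x k v' \<longrightarrow>
            twoarr C x a (comp1 C u v) (comp1 C u v') \<beta> \<longrightarrow>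
            Cmp C \<kappa> (fst v) = Add C (Cmp C \<kappa> (fst v')) (Cmp C (snd f) \<beta>) \<longrightarrow>
            (\<exists>\<alpha>. twoarr C x k v v' \<alpha> \<and> Cmp C (snd u) \<alpha> = \<beta>)) \<and>
        \<comment> \<open>essentially surjective\<close>
        (\<forall>w \<phi>. arr1 C x a w \<longrightarrow> twoarr C x b (comp1 C f w) (zero1 C x b) \<phi> \<longrightarrow>
            (\<exists>v \<beta>. arr1 C x k v \<and> twoarr C x a (comp1 C u v) w \<beta> \<and>
               Cmp C \<kappa> (fst v) = Add C \<phi> (Cmp C (snd f) \<beta>))))"

end

theory Submission imports Defs begin

(* Only the preadditive structure of the abelian category, the two
   pull-back squares, the fact that e is epi, and projectivity of the codomains
   of objects of A^[1]_c are used.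
   Write u = (k e, e') and theta = kappa e.  The object c has projective codomain
   C0, u is a morphism c -> a because k' e' = e c, and theta is a 2-arrow
   f u => 0 because kappa k' = f1 and f0 k = b kappa.  For the 2-kernel property
   the key observation is a lifting lemma: a pair (d : W -> C0, beta : W -> A1)
   with k e d = a beta and kappa e d = f1 beta factors uniquely through C1, since
   then e d = k' beta by the pull-back K.  Faithfulness is the uniqueness half,
   fullness applies the lemma to a difference of 0-components, and essential
   surjectivity first lifts (w0, phi) to K, then to C0 by projectivity of X0,
   and finally applies the lemma to (v0 x, w1). *)

locale category_ctx =
  fixes C :: "('o, 'm) acat"
  assumes category: "category C"
begin

abbreviation comp :: "'m \<Rightarrow> 'm \<Rightarrow> 'm" (infixr "\<cdot>" 70)
  where "g \<cdot> f \<equiv> Cmp C g f"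

lemma hom_objs: "f \<in> hom C X Y \<Longrightarrow> X \<in> Obj C \<and> Y \<in> Obj C"
  using category unfolding category_def hom_def by blast

lemma comp_hom: "f \<in> hom C X Y \<Longrightarrow> g \<in> hom C Y Z \<Longrightarrow> g \<cdot> f \<in> hom C X Z"
  using category unfolding category_def by blast

lemma comp_assoc:
  "f \<in> hom C W X \<Longrightarrow> g \<in> hom C X Y \<Longrightarrow> h \<in> hom C Y Z \<Longrightarrow> h \<cdot> g \<cdot> f = (h \<cdot> g) \<cdot> f"
  using category unfolding category_def by blast

lemma pullback_unique:
  assumes pb: "is_pullback C f g P p q"
    and u1: "u1 \<in> hom C W P" and u2: "u2 \<in> hom C W P"
    and "p \<cdot> u1 = p \<cdot> u2" and "q \<cdot> u1 = q \<cdot> u2"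
  shows "u1 = u2"
proof -
  have p: "p \<in> hom C P (Dom C f)" and q: "q \<in> hom C P (Dom C g)"
    and f: "f \<in> hom C (Dom C f) (Cod C f)" and g: "g \<in> hom C (Dom C g) (Cod C f)"
    using pb unfolding is_pullback_def hom_def by auto
  have "f \<cdot> p \<cdot> u1 = g \<cdot> q \<cdot> u1"
    using comp_assoc[OF u1 p f] comp_assoc[OF u1 q g] pb unfolding is_pullback_def by simp
  then have "\<exists>!u. u \<in> hom C W P \<and> p \<cdot> u = p \<cdot> u1 \<and> q \<cdot> u = q \<cdot> u1"
    using pb hom_objs[OF u1] comp_hom[OF u1 p] comp_hom[OF u1 q]
    unfolding is_pullback_def by blast
  then show ?thesis using assms by metis
qed

lemma pullback_lift:
  assumes pb: "is_pullback C f g P p q"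
    and "h1 \<in> hom C W (Dom C f)" and "h2 \<in> hom C W (Dom C g)" and "f \<cdot> h1 = g \<cdot> h2"
  obtains u where "u \<in> hom C W P" "p \<cdot> u = h1" "q \<cdot> u = h2"
  using assms hom_objs[OF assms(2)] unfolding is_pullback_def by blast

end

locale preadditive_category =
  fixes C :: "('o, 'm) acat"
  assumes preadditive: "preadditive C"

sublocale preadditive_category \<subseteq> category_ctx
  using preadditive unfolding preadditive_def by unfold_locales blast

context preadditive_category
begin

abbreviation add :: "'m \<Rightarrow> 'm \<Rightarrow> 'm" (infixl "\<oplus>" 65)
  where "f \<oplus> g \<equiv> Add C f g"

abbreviation minus :: "'m \<Rightarrow> 'm \<Rightarrow> 'm" (infixl "\<ominus>" 65)
  where "f \<ominus> g \<equiv> diff C f g"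

lemma zero_hom: "X \<in> Obj C \<Longrightarrow> Y \<in> Obj C \<Longrightarrow> Zer C X Y \<in> hom C X Y"
  and add_hom: "f \<in> hom C X Y \<Longrightarrow> g \<in> hom C X Y \<Longrightarrow> f \<oplus> g \<in> hom C X Y"
  and neg_hom: "f \<in> hom C X Y \<Longrightarrow> Neg C f \<in> hom C X Y"
  and add_assoc: "f \<in> hom C X Y \<Longrightarrow> g \<in> hom C X Y \<Longrightarrow> h \<in> hom C X Y \<Longrightarrow>
         f \<oplus> g \<oplus> h = f \<oplus> (g \<oplus> h)"
  and add_comm: "f \<in> hom C X Y \<Longrightarrow> g \<in> hom C X Y \<Longrightarrow> f \<oplus> g = g \<oplus> f"
  and add_zero: "f \<in> hom C X Y \<Longrightarrow> f \<oplus> Zer C X Y = f"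
  and add_neg: "f \<in> hom C X Y \<Longrightarrow> f \<oplus> Neg C f = Zer C X Y"
  and comp_add_left: "f \<in> hom C X Y \<Longrightarrow> g \<in> hom C X Y \<Longrightarrow> h \<in> hom C Y Z \<Longrightarrow>
         h \<cdot> (f \<oplus> g) = h \<cdot> f \<oplus> h \<cdot> g"
  and comp_add_right: "f \<in> hom C X Y \<Longrightarrow> g \<in> hom C Y Z \<Longrightarrow> h \<in> hom C Y Z \<Longrightarrow>
         (g \<oplus> h) \<cdot> f = g \<cdot> f \<oplus> h \<cdot> f"
  using preadditive unfolding preadditive_def by simp_all

lemma diff_hom: "f \<in> hom C X Y \<Longrightarrow> g \<in> hom C X Y \<Longrightarrow> f \<ominus> g \<in> hom C X Y"
  unfolding diff_def by (simp add: add_hom neg_hom)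

lemma diff_self: "f \<in> hom C X Y \<Longrightarrow> f \<ominus> f = Zer C X Y"
  unfolding diff_def by (rule add_neg)

lemma add_idem_zero:
  assumes z: "z \<in> hom C X Y" and "z \<oplus> z = z"
  shows "z = Zer C X Y"
proof -
  have "z = z \<oplus> (z \<oplus> Neg C z)" using add_zero[OF z] add_neg[OF z] by simp
  also have "\<dots> = z \<oplus> z \<oplus> Neg C z" using add_assoc[OF z z neg_hom[OF z]] by simp
  also have "\<dots> = Zer C X Y" using assms add_neg[OF z] by simp
  finally show ?thesis .
qed

lemma neg_unique:
  assumes f: "f \<in> hom C X Y" and g: "g \<in> hom C X Y" and "f \<oplus> g = Zer C X Y"
  shows "g = Neg C f"
proof -
  have n: "Neg C f \<in> hom C X Y" using f by (rule neg_hom)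
  have "g = g \<oplus> (f \<oplus> Neg C f)" using add_zero[OF g] add_neg[OF f] by simp
  also have "\<dots> = (f \<oplus> g) \<oplus> Neg C f" using add_assoc[OF g f n] add_comm[OF f g] by simp
  also have "\<dots> = Neg C f" using assms add_comm[OF n] add_zero[OF n] hom_objs[OF f]
      zero_hom by simp
  finally show ?thesis .
qed

lemma comp_zero_right:
  assumes h: "h \<in> hom C Y Z" and X: "X \<in> Obj C"
  shows "h \<cdot> Zer C X Y = Zer C X Z"
proof -
  have z: "Zer C X Y \<in> hom C X Y" using zero_hom X hom_objs[OF h] by simp
  show ?thesis
    using add_idem_zero[OF comp_hom[OF z h]] comp_add_left[OF z z h] add_zero[OF z] by simp
qed

lemma comp_zero_left:
  assumes h: "h \<in> hom C X Y" and Z: "Z \<in> Obj C"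
  shows "Zer C Y Z \<cdot> h = Zer C X Z"
proof -
  have z: "Zer C Y Z \<in> hom C Y Z" using zero_hom Z hom_objs[OF h] by simp
  show ?thesis
    using add_idem_zero[OF comp_hom[OF h z]] comp_add_right[OF h z z] add_zero[OF z] by simp
qed

lemma diff_zero:
  assumes f: "f \<in> hom C X Y"
  shows "f \<ominus> Zer C X Y = f"
proof -
  have z: "Zer C X Y \<in> hom C X Y" using zero_hom hom_objs[OF f] by simp
  have "Neg C (Zer C X Y) = Zer C X Y" using neg_unique[OF z z] add_zero[OF z] by simp
  then show ?thesis unfolding diff_def using add_zero[OF f] by simp
qed

lemma comp_neg_left:
  assumes f: "f \<in> hom C X Y" and h: "h \<in> hom C Y Z"
  shows "h \<cdot> Neg C f = Neg C (h \<cdot> f)"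
proof -
  have n: "Neg C f \<in> hom C X Y" using f by (rule neg_hom)
  have "h \<cdot> f \<oplus> h \<cdot> Neg C f = Zer C X Z"
    using comp_add_left[OF f n h] add_neg[OF f] comp_zero_right[OF h] hom_objs[OF f] by simp
  then show ?thesis using neg_unique[OF comp_hom[OF f h] comp_hom[OF n h]] by simp
qed

lemma comp_neg_right:
  assumes f: "f \<in> hom C X Y" and h: "h \<in> hom C Y Z"
  shows "Neg C h \<cdot> f = Neg C (h \<cdot> f)"
proof -
  have n: "Neg C h \<in> hom C Y Z" using h by (rule neg_hom)
  have "h \<cdot> f \<oplus> Neg C h \<cdot> f = Zer C X Z"
    using comp_add_right[OF f h n] add_neg[OF h] comp_zero_left[OF f] hom_objs[OF h] by simp
  then show ?thesis using neg_unique[OF comp_hom[OF f h] comp_hom[OF f n]] by simp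
qed

lemma comp_diff_left:
  assumes "f \<in> hom C X Y" "g \<in> hom C X Y" "h \<in> hom C Y Z"
  shows "h \<cdot> (f \<ominus> g) = h \<cdot> f \<ominus> h \<cdot> g"
  unfolding diff_def using assms comp_add_left[OF _ neg_hom] comp_neg_left by simp

lemma comp_diff_right:
  assumes "f \<in> hom C X Y" "g \<in> hom C Y Z" "h \<in> hom C Y Z"
  shows "(g \<ominus> h) \<cdot> f = g \<cdot> f \<ominus> h \<cdot> f"
  unfolding diff_def using assms comp_add_right[OF _ _ neg_hom] comp_neg_right by simp

lemma add_diff_cancel_left:
  assumes q: "q \<in> hom C X Y" and r: "r \<in> hom C X Y"
  shows "q \<oplus> r \<ominus> q = r"
proof -
  have "q \<oplus> r \<ominus> q = r \<oplus> (q \<oplus> Neg C q)"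
    unfolding diff_def using add_comm[OF q r] add_assoc[OF r q neg_hom[OF q]] by simp
  then show ?thesis using add_neg[OF q] add_zero[OF r] by simp
qed

end

section \<open>The 2-kernel construction in A^[1]_c\<close>

locale twokernel_construction = preadditive_category C
  for C :: "('o, 'm) acat" +
  fixes a b f0 f1 k \<kappa> k' \<epsilon> c \<epsilon>' :: 'm and K C0 C1 :: 'o
  assumes a_obj: "obj1c C a"
    and b_obj: "obj1c C b"
    and f_arr: "arr1 C a b (f0, f1)"
    and K_pb: "is_pullback C f0 b K k \<kappa>"
    and k'_hom: "k' \<in> hom C (Dom C a) K"
    and k'_1: "k \<cdot> k' = a"
    and k'_2: "\<kappa> \<cdot> k' = f1"
    and C0_proj: "projective C C0"
    and \<epsilon>_hom: "\<epsilon> \<in> hom C C0 K"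
    and \<epsilon>_epi: "epi C \<epsilon>"
    and C1_pb: "is_pullback C \<epsilon> k' C1 c \<epsilon>'"
begin

abbreviation "A0 \<equiv> Cod C a"
abbreviation "A1 \<equiv> Dom C a"
abbreviation "B0 \<equiv> Cod C b"
abbreviation "B1 \<equiv> Dom C b"

lemma a_hom: "a \<in> hom C A1 A0" and b_hom: "b \<in> hom C B1 B0"
  using a_obj b_obj unfolding obj1c_def hom_def by auto

lemma f0_hom: "f0 \<in> hom C A0 B0" and f1_hom: "f1 \<in> hom C A1 B1"
  and f_square: "b \<cdot> f1 = f0 \<cdot> a"
  using f_arr unfolding arr1_def by auto

lemma k_hom: "k \<in> hom C K A0" and \<kappa>_hom: "\<kappa> \<in> hom C K B1" and K_square: "f0 \<cdot> k = b \<cdot> \<kappa>"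
  using K_pb f0_hom unfolding is_pullback_def hom_def by auto

lemma c_hom: "c \<in> hom C C1 C0" and \<epsilon>'_hom: "\<epsilon>' \<in> hom C C1 A1" and C1_square: "\<epsilon> \<cdot> c = k' \<cdot> \<epsilon>'"
  using C1_pb \<epsilon>_hom k'_hom unfolding is_pullback_def hom_def by auto

lemma c_dom_cod: "Dom C c = C1" "Cod C c = C0"
  using c_hom unfolding hom_def by auto

lemma c_obj: "obj1c C c"
  using c_hom C0_proj unfolding obj1c_def hom_def by auto

lemma k\<epsilon>_hom: "k \<cdot> \<epsilon> \<in> hom C C0 A0" and \<kappa>\<epsilon>_hom: "\<kappa> \<cdot> \<epsilon> \<in> hom C C0 B1"
  using comp_hom[OF \<epsilon>_hom] k_hom \<kappa>_hom by auto

lemma K_unique: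
  "g \<in> hom C W K \<Longrightarrow> h \<in> hom C W K \<Longrightarrow> k \<cdot> g = k \<cdot> h \<Longrightarrow> \<kappa> \<cdot> g = \<kappa> \<cdot> h \<Longrightarrow> g = h"
  by (rule pullback_unique[OF K_pb])

lemma C1_lift:
  assumes d: "d \<in> hom C W C0" and \<beta>: "\<beta> \<in> hom C W A1"
    and k_eq: "k \<cdot> \<epsilon> \<cdot> d = a \<cdot> \<beta>" and \<kappa>_eq: "\<kappa> \<cdot> \<epsilon> \<cdot> d = f1 \<cdot> \<beta>"
  obtains \<gamma> where "\<gamma> \<in> hom C W C1" "c \<cdot> \<gamma> = d" "\<epsilon>' \<cdot> \<gamma> = \<beta>"
proof -
  have "\<epsilon> \<cdot> d = k' \<cdot> \<beta>"
  proof (rule K_unique[OF comp_hom[OF d \<epsilon>_hom] comp_hom[OF \<beta> k'_hom]])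
    show "k \<cdot> \<epsilon> \<cdot> d = k \<cdot> k' \<cdot> \<beta>" using k_eq comp_assoc[OF \<beta> k'_hom k_hom] k'_1 by simp
    show "\<kappa> \<cdot> \<epsilon> \<cdot> d = \<kappa> \<cdot> k' \<cdot> \<beta>" using \<kappa>_eq comp_assoc[OF \<beta> k'_hom \<kappa>_hom] k'_2 by simp
  qed
  then show ?thesis
    using pullback_lift[OF C1_pb] d \<beta> \<epsilon>_hom k'_hom that unfolding hom_def by auto
qed

lemma C1_unique:
  "g \<in> hom C W C1 \<Longrightarrow> h \<in> hom C W C1 \<Longrightarrow> c \<cdot> g = c \<cdot> h \<Longrightarrow> \<epsilon>' \<cdot> g = \<epsilon>' \<cdot> h \<Longrightarrow> g = h"
  by (rule pullback_unique[OF C1_pb])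

lemma u_arr: "arr1 C c a (k \<cdot> \<epsilon>, \<epsilon>')"
proof -
  have "a \<cdot> \<epsilon>' = k \<cdot> k' \<cdot> \<epsilon>'" using comp_assoc[OF \<epsilon>'_hom k'_hom k_hom] k'_1 by simp
  also have "\<dots> = (k \<cdot> \<epsilon>) \<cdot> c" using C1_square comp_assoc[OF c_hom \<epsilon>_hom k_hom] by simp
  finally show ?thesis
    unfolding arr1_def obj1_def using c_hom a_hom k\<epsilon>_hom \<epsilon>'_hom c_dom_cod
    unfolding hom_def by auto
qed

lemma \<kappa>\<epsilon>_twoarr: "twoarr C c b (comp1 C (f0, f1) (k \<cdot> \<epsilon>, \<epsilon>')) (zero1 C c b) (\<kappa> \<cdot> \<epsilon>)"
proof -
  have Obs: "C0 \<in> Obj C" "C1 \<in> Obj C" "B0 \<in> Obj C" "B1 \<in> Obj C"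
    using hom_objs[OF c_hom] hom_objs[OF b_hom] by auto
  have comp_f_u: "arr1 C c b (f0 \<cdot> k \<cdot> \<epsilon>, f1 \<cdot> \<epsilon>')"
  proof -
    have "b \<cdot> f1 \<cdot> \<epsilon>' = (f0 \<cdot> a) \<cdot> \<epsilon>'" using comp_assoc[OF \<epsilon>'_hom f1_hom b_hom] f_square by simp
    also have "\<dots> = f0 \<cdot> (k \<cdot> \<epsilon>) \<cdot> c"
      using u_arr comp_assoc[OF \<epsilon>'_hom a_hom f0_hom] unfolding arr1_def by simp
    also have "\<dots> = (f0 \<cdot> k \<cdot> \<epsilon>) \<cdot> c" using comp_assoc[OF c_hom k\<epsilon>_hom f0_hom] by simp
    finally show ?thesis
      unfolding arr1_def obj1_def using c_hom b_obj c_dom_cod comp_hom[OF k\<epsilon>_hom f0_hom]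
        comp_hom[OF \<epsilon>'_hom f1_hom] unfolding obj1c_def hom_def by simp
  qed
  have zero_arr: "arr1 C c b (zero1 C c b)"
    unfolding arr1_def obj1_def zero1_def using c_hom b_obj c_dom_cod zero_hom Obs
      comp_zero_right[OF b_hom Obs(2)] comp_zero_left[OF c_hom Obs(3)]
    unfolding obj1c_def hom_def by simp
  have eq1: "f1 \<cdot> \<epsilon>' = (\<kappa> \<cdot> \<epsilon>) \<cdot> c"
    using k'_2 comp_assoc[OF \<epsilon>'_hom k'_hom \<kappa>_hom] C1_square comp_assoc[OF c_hom \<epsilon>_hom \<kappa>_hom]
    by simp
  have eq0: "f0 \<cdot> k \<cdot> \<epsilon> = b \<cdot> \<kappa> \<cdot> \<epsilon>"
    using comp_assoc[OF \<epsilon>_hom k_hom f0_hom] K_square comp_assoc[OF \<epsilon>_hom \<kappa>_hom b_hom] by simp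
  show ?thesis
    unfolding twoarr_def comp1_def using comp_f_u zero_arr \<kappa>\<epsilon>_hom eq0 eq1 c_dom_cod
      diff_zero[OF comp_hom[OF k\<epsilon>_hom f0_hom]] diff_zero[OF comp_hom[OF \<epsilon>'_hom f1_hom]]
    unfolding zero1_def by simp
qed

lemma twoarr_into_c:
  assumes "twoarr C x c v v' \<alpha>"
  shows "\<alpha> \<in> hom C (Cod C x) C1" "c \<cdot> \<alpha> = fst v \<ominus> fst v'"
  using assms c_dom_cod unfolding twoarr_def by auto

text \<open>Faithfulness: a 2-arrow into c is determined by its whiskering with u,
  since its composite with c is fixed.\<close>
lemma faithful:
  assumes "twoarr C x c v v' \<alpha>" "twoarr C x c v v' \<alpha>'" "\<epsilon>' \<cdot> \<alpha> = \<epsilon>' \<cdot> \<alpha>'"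
  shows "\<alpha> = \<alpha>'"
  using C1_unique twoarr_into_c[OF assms(1)] twoarr_into_c[OF assms(2)] assms(3) by metis

text \<open>Fullness: a 2-arrow beta : u v => u v' compatible with the kappa e components
  lifts, via the lifting lemma applied to the difference of 0-components.\<close>
lemma full:
  assumes v: "arr1 C x c v" and v': "arr1 C x c v'"
    and \<beta>: "twoarr C x a (comp1 C (k \<cdot> \<epsilon>, \<epsilon>') v) (comp1 C (k \<cdot> \<epsilon>, \<epsilon>') v') \<beta>"
    and compat: "(\<kappa> \<cdot> \<epsilon>) \<cdot> fst v = (\<kappa> \<cdot> \<epsilon>) \<cdot> fst v' \<oplus> f1 \<cdot> \<beta>"
  shows "\<exists>\<alpha>. twoarr C x c v v' \<alpha> \<and> \<epsilon>' \<cdot> \<alpha> = \<beta>"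
proof -
  have x: "x \<in> hom C (Dom C x) (Cod C x)" using v unfolding arr1_def obj1_def hom_def by simp
  have v0: "fst v \<in> hom C (Cod C x) C0" and v1: "snd v \<in> hom C (Dom C x) C1"
    and v_sq: "c \<cdot> snd v = fst v \<cdot> x"
    and v0': "fst v' \<in> hom C (Cod C x) C0" and v1': "snd v' \<in> hom C (Dom C x) C1"
    and v_sq': "c \<cdot> snd v' = fst v' \<cdot> x"
    using v v' c_dom_cod unfolding arr1_def by auto
  have \<beta>_hom: "\<beta> \<in> hom C (Cod C x) A1"
    and \<beta>1: "\<epsilon>' \<cdot> snd v \<ominus> \<epsilon>' \<cdot> snd v' = \<beta> \<cdot> x"
    and \<beta>0: "(k \<cdot> \<epsilon>) \<cdot> fst v \<ominus> (k \<cdot> \<epsilon>) \<cdot> fst v' = a \<cdot> \<beta>"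
    using \<beta> unfolding twoarr_def comp1_def by auto
  define d0 where "d0 = fst v \<ominus> fst v'"
  define d1 where "d1 = snd v \<ominus> snd v'"
  have d0: "d0 \<in> hom C (Cod C x) C0" unfolding d0_def using diff_hom[OF v0 v0'] .
  have d1: "d1 \<in> hom C (Dom C x) C1" unfolding d1_def using diff_hom[OF v1 v1'] .
  have "k \<cdot> \<epsilon> \<cdot> d0 = a \<cdot> \<beta>"
    using comp_assoc[OF d0 \<epsilon>_hom k_hom] comp_diff_left[OF v0 v0' k\<epsilon>_hom] \<beta>0
    unfolding d0_def by simp
  moreover have "\<kappa> \<cdot> \<epsilon> \<cdot> d0 = f1 \<cdot> \<beta>"
    using comp_assoc[OF d0 \<epsilon>_hom \<kappa>_hom] comp_diff_left[OF v0 v0' \<kappa>\<epsilon>_hom] compat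
      add_diff_cancel_left[OF comp_hom[OF v0' \<kappa>\<epsilon>_hom] comp_hom[OF \<beta>_hom f1_hom]]
    unfolding d0_def by simp
  ultimately obtain \<alpha> where \<alpha>: "\<alpha> \<in> hom C (Cod C x) C1" and c\<alpha>: "c \<cdot> \<alpha> = d0"
    and \<epsilon>'\<alpha>: "\<epsilon>' \<cdot> \<alpha> = \<beta>"
    using C1_lift[OF d0 \<beta>_hom] by blast
  have "d1 = \<alpha> \<cdot> x"
  proof (rule C1_unique[OF d1 comp_hom[OF x \<alpha>]])
    show "c \<cdot> d1 = c \<cdot> \<alpha> \<cdot> x"
      using comp_diff_left[OF v1 v1' c_hom] v_sq v_sq' comp_diff_right[OF x v0 v0']
        comp_assoc[OF x \<alpha> c_hom] c\<alpha> unfolding d0_def d1_def by simp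
    show "\<epsilon>' \<cdot> d1 = \<epsilon>' \<cdot> \<alpha> \<cdot> x"
      using comp_diff_left[OF v1 v1' \<epsilon>'_hom] \<beta>1 comp_assoc[OF x \<alpha> \<epsilon>'_hom] \<epsilon>'\<alpha>
      unfolding d1_def by simp
  qed
  then have "twoarr C x c v v' \<alpha>"
    unfolding twoarr_def using v v' \<alpha> c\<alpha> c_dom_cod unfolding d0_def d1_def by simp
  with \<epsilon>'\<alpha> show ?thesis by blast
qed

text \<open>Essential surjectivity: (w, phi) is lifted first to K, then to C0 using
  projectivity of the codomain of x, and then to C1 by the lifting lemma; the
  resulting v satisfies u v = w on the nose.\<close>
lemma essentially_surjective:
  assumes x_proj: "projective C (Cod C x)"
    and w: "arr1 C x a w" and \<phi>: "twoarr C x b (comp1 C (f0, f1) w) (zero1 C x b) \<phi>"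
  shows "\<exists>v \<beta>. arr1 C x c v \<and> twoarr C x a (comp1 C (k \<cdot> \<epsilon>, \<epsilon>') v) w \<beta> \<and>
           (\<kappa> \<cdot> \<epsilon>) \<cdot> fst v = \<phi> \<oplus> f1 \<cdot> \<beta>"
proof -
  have x: "x \<in> hom C (Dom C x) (Cod C x)" using w unfolding arr1_def obj1_def hom_def by simp
  have X0: "Cod C x \<in> Obj C" using hom_objs[OF x] by simp
  have w0: "fst w \<in> hom C (Cod C x) A0" and w1: "snd w \<in> hom C (Dom C x) A1"
    and w_sq: "a \<cdot> snd w = fst w \<cdot> x"
    using w unfolding arr1_def by auto
  have \<phi>_hom: "\<phi> \<in> hom C (Cod C x) B1"
    and \<phi>1: "f1 \<cdot> snd w \<ominus> Zer C (Dom C x) B1 = \<phi> \<cdot> x"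
    and \<phi>0: "f0 \<cdot> fst w \<ominus> Zer C (Cod C x) B0 = b \<cdot> \<phi>"
    using \<phi> unfolding twoarr_def comp1_def zero1_def by auto
  have \<phi>1': "f1 \<cdot> snd w = \<phi> \<cdot> x" using \<phi>1 diff_zero[OF comp_hom[OF w1 f1_hom]] by simp
  have \<phi>0': "f0 \<cdot> fst w = b \<cdot> \<phi>" using \<phi>0 diff_zero[OF comp_hom[OF w0 f0_hom]] by simp
  obtain g where g: "g \<in> hom C (Cod C x) K" and kg: "k \<cdot> g = fst w" and \<kappa>g: "\<kappa> \<cdot> g = \<phi>"
    using pullback_lift[OF K_pb _ _ \<phi>0'] w0 \<phi>_hom f0_hom b_hom unfolding hom_def by auto
  obtain v0 where v0: "v0 \<in> hom C (Cod C x) C0" and \<epsilon>v0: "\<epsilon> \<cdot> v0 = g"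
    using x_proj \<epsilon>_hom \<epsilon>_epi g unfolding projective_def by blast
  have "k \<cdot> \<epsilon> \<cdot> v0 \<cdot> x = a \<cdot> snd w"
    using comp_assoc[OF x v0 \<epsilon>_hom] \<epsilon>v0 comp_assoc[OF x g k_hom] kg w_sq by simp
  moreover have "\<kappa> \<cdot> \<epsilon> \<cdot> v0 \<cdot> x = f1 \<cdot> snd w"
    using comp_assoc[OF x v0 \<epsilon>_hom] \<epsilon>v0 comp_assoc[OF x g \<kappa>_hom] \<kappa>g \<phi>1' by simp
  ultimately obtain v1 where v1: "v1 \<in> hom C (Dom C x) C1" and cv1: "c \<cdot> v1 = v0 \<cdot> x"
    and \<epsilon>'v1: "\<epsilon>' \<cdot> v1 = snd w"
    using C1_lift[OF comp_hom[OF x v0] w1] by blast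
  have v_arr: "arr1 C x c (v0, v1)"
    unfolding arr1_def obj1_def using w v0 v1 cv1 c_hom c_dom_cod
    unfolding arr1_def obj1_def hom_def by simp
  have uv: "comp1 C (k \<cdot> \<epsilon>, \<epsilon>') (v0, v1) = w"
    unfolding comp1_def using comp_assoc[OF v0 \<epsilon>_hom k_hom] \<epsilon>v0 kg \<epsilon>'v1 by (simp add: prod_eq_iff)
  have z: "Zer C (Cod C x) A1 \<in> hom C (Cod C x) A1" using zero_hom X0 hom_objs[OF a_hom] by simp
  have "twoarr C x a w w (Zer C (Cod C x) A1)"
    unfolding twoarr_def using w z diff_self[OF w1] diff_self[OF w0]
      comp_zero_left[OF x] comp_zero_right[OF a_hom X0] hom_objs[OF a_hom] by simp
  moreover have "(\<kappa> \<cdot> \<epsilon>) \<cdot> v0 = \<phi> \<oplus> f1 \<cdot> Zer C (Cod C x) A1"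
    using comp_assoc[OF v0 \<epsilon>_hom \<kappa>_hom] \<epsilon>v0 \<kappa>g comp_zero_right[OF f1_hom X0]
      add_zero[OF \<phi>_hom] by simp
  ultimately show ?thesis using v_arr uv by force
qed

lemma is_2kernel: "is_2kernel_c C a b (f0, f1) c (k \<cdot> \<epsilon>, \<epsilon>') (\<kappa> \<cdot> \<epsilon>)"
  unfolding is_2kernel_c_def
  using a_obj b_obj f_arr c_obj u_arr \<kappa>\<epsilon>_twoarr faithful full essentially_surjective
  unfolding obj1c_def by simp

end

theorem mainTheorem11:
  fixes C :: "('o, 'm) acat"
    and a b f0 f1 k \<kappa> k' \<epsilon> c \<epsilon>' :: 'm
    and K C0 C1 :: 'o
  assumes abel: "abelian C"
    and enough: "enough_projectives C"
    and a_obj: "obj1c C a"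
    and b_obj: "obj1c C b"
    and f_arr: "arr1 C a b (f0, f1)"
    and K_pb: "is_pullback C f0 b K k \<kappa>"
    and k'_hom: "k' \<in> hom C (Dom C a) K"
    and k'_1: "Cmp C k k' = a"
    and k'_2: "Cmp C \<kappa> k' = f1"
    and C0_proj: "projective C C0"
    and \<epsilon>_hom: "\<epsilon> \<in> hom C C0 K"
    and \<epsilon>_epi: "epi C \<epsilon>"
    and C1_pb: "is_pullback C \<epsilon> k' C1 c \<epsilon>'"
  shows "obj1c C c \<and> arr1 C c a (Cmp C k \<epsilon>, \<epsilon>')
    \<and> twoarr C c b (comp1 C (f0, f1) (Cmp C k \<epsilon>, \<epsilon>')) (zero1 C c b) (Cmp C \<kappa> \<epsilon>)
    \<and> is_2kernel_c C a b (f0, f1) c (Cmp C k \<epsilon>, \<epsilon>') (Cmp C \<kappa> \<epsilon>)"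
proof -
  have "preadditive C" using abel unfolding abelian_def by blast
  then interpret twokernel_construction C a b f0 f1 k \<kappa> k' \<epsilon> c \<epsilon>' K C0 C1
    using assms by unfold_locales
  show ?thesis using c_obj u_arr \<kappa>\<epsilon>_twoarr is_2kernel by blast
qed

end
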